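(* Let $B$ be an $n\times n$ skew-symmetrizable matrix, $\mathbf d=(d_1,\dots,d_n)$ positive integers, $D=\mathrm{diag}(d_1,\dots,d_n)$. For every vertex $t$ of $\mathbb T_n$, the $C$-matrix $C^t$ of the $(\mathbf d,\mathbf z)$-cluster pattern with principal coefficients and initial seed $(\mathbf x,\mathbf y,B)$ equals the $C$-matrix at $t$ of the ordinary cluster pattern with principal coefficients and initial seed $(\mathbf x,\mathbf y,DB)$ (same initial vertex $t_0$).
   Context: $[a]_+=\max(a,0)$; all matrices are integer; $DB$ is again skew-symmetrizable. Mutation data: positive integers $\mathbf d$ and frozen coefficients $z_{i,s}$ ($1\le s\le d_i-1$) with $z_{i,s}=z_{i,d_i-s}$, $z_{i,0}=z_{i,d_i}=1$. For formal variables $\mathbf y,\mathbf z$, $\mathrm{Trop}(\mathbf y,\mathbf z)$ is the free abelian multiplicative group they generate with $\oplus$ the componentwise minimum of exponents. The $(\mathbf d,\mathbf z)$-mutation at $k$ acts on a skew-symmetrizable $B=(b_{ij})$ and $y$-variables by: $b'_{ij}=-b_{ij}$ if $i=k$ or $j=k$, else $b'_{ij}=b_{ij}+d_k([-b_{ik}]_+b_{kj}+b_{ik}[b_{kj}]_+)$; $y'_k=y_k^{-1}$, $y'_i=y_i(y_k^{[\varepsilon b_{ki}]_+})^{d_k}(\bigoplus_{s=0}^{d_k}z_{k,s}y_k^{\varepsilon s})^{-b_{ki}}$ ($i\ne k$), $\varepsilon=\pm1$. $\mathbb T_n$ is the $n$-regular tree with edges labeled $1,\dots,n$, distinct labels at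 each vertex. A $(\mathbf d,\mathbf z)$-cluster pattern with principal coefficients assigns seeds in $\mathrm{Trop}(\mathbf y,\mathbf z)$ to vertices, related by mutation at $k$ along edges labeled $k$, with initial seed $(\mathbf x,\mathbf y,B)$ at a fixed vertex $t_0$ whose $y$-variables are the generators $y_i$. Each $y$-variable $y^t_j$ is a Laurent monomial $\prod_iy_i^{c^t_{ij}}$ in $\mathbf y$ alone; $C^t=(c^t_{ij})$ is the $C$-matrix. The ordinary (Fomin–Zelevinsky) cluster pattern with principal coefficients is the special case $\mathbf d=(1,\dots,1)$ (no $\mathbf z$), with $C$-matrices defined the same way. *)

theory Defs
  imports Main
begin

text \<open>Integer matrices are functions nat \<Rightarrow> nat \<Rightarrow> int; only entries with indices < n matter.\<close>

definition skew_symmetrizable :: "nat \<Rightarrow> (nat \<Rightarrow> nat \<Rightarrow> int) \<Rightarrow> bool" where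
  "skew_symmetrizable n B \<longleftrightarrow>
     (\<exists>r :: nat \<Rightarrow> int. (\<forall>i<n. r i > 0) \<and>
        (\<forall>i<n. \<forall>j<n. r i * B i j = - (r j * B j i)))"

definition pospart :: "int \<Rightarrow> int" where
  "pospart a = max a 0"

text \<open>Elements of Trop(y,z): Laurent monomials, encoded by exponent vectors.
  The first component gives the exponent of y_i, the second the exponent of
  the generator z_{i,s} (stored at the canonical index s' = min s (d_i - s),
  which encodes the identification z_{i,s} = z_{i,d_i - s}).\<close>
type_synonym trop = "(nat \<Rightarrow> int) \<times> (nat \<Rightarrow> nat \<Rightarrow> int)"

definition tone :: trop where
  "tone = (\<lambda>_. 0, \<lambda>_ _. 0)"

definition tmul :: "trop \<Rightarrow> trop \<Rightarrow> trop" where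
  "tmul a b = (\<lambda>i. fst a i + fst b i, \<lambda>i s. snd a i s + snd b i s)"

definition tpow :: "trop \<Rightarrow> int \<Rightarrow> trop" where
  "tpow a e = (\<lambda>i. e * fst a i, \<lambda>i s. e * snd a i s)"

text \<open>Tropical sum over a finite nonempty index set: componentwise minimum of exponents.\<close>
definition tsum :: "(nat \<Rightarrow> trop) \<Rightarrow> nat set \<Rightarrow> trop" where
  "tsum f S = (\<lambda>i. Min ((\<lambda>s. fst (f s) i) ` S), \<lambda>i t. Min ((\<lambda>s. snd (f s) i t) ` S))"

definition ygen :: "nat \<Rightarrow> trop" where
  "ygen i = ((\<lambda>j. if j = i then 1 else 0), \<lambda>_ _. 0)"

definition zgen :: "(nat \<Rightarrow> nat) \<Rightarrow> nat \<Rightarrow> nat \<Rightarrow> trop" where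
  "zgen d k s = (if s = 0 \<or> s = d k then tone
                 else (\<lambda>_. 0, \<lambda>i t. if i = k \<and> t = min s (d k - s) then 1 else 0))"

definition mut_B :: "(nat \<Rightarrow> nat) \<Rightarrow> nat \<Rightarrow> (nat \<Rightarrow> nat \<Rightarrow> int) \<Rightarrow> (nat \<Rightarrow> nat \<Rightarrow> int)" where
  "mut_B d k B = (\<lambda>i j. if i = k \<or> j = k then - B i j
      else B i j + int (d k) * (pospart (- B i k) * B k j + B i k * pospart (B k j)))"

definition mut_y :: "(nat \<Rightarrow> nat) \<Rightarrow> int \<Rightarrow> nat \<Rightarrow> (nat \<Rightarrow> nat \<Rightarrow> int) \<Rightarrow> (nat \<Rightarrow> trop) \<Rightarrow> (nat \<Rightarrow> trop)" where
  "mut_y d eps k B y = (\<lambda>i. if i = k then tpow (y k) (-1)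
      else tmul (y i)
             (tmul (tpow (tpow (y k) (pospart (eps * B k i))) (int (d k)))
                   (tpow (tsum (\<lambda>s. tmul (zgen d k s) (tpow (y k) (eps * int s))) {0..d k})
                         (- B k i))))"

text \<open>Vertices of the n-regular tree T_n are identified with the reduced words
  (no two consecutive equal letters) over {0..<n}: the labels of the unique path from t0.\<close>
definition tree_vertex :: "nat \<Rightarrow> nat list \<Rightarrow> bool" where
  "tree_vertex n w \<longleftrightarrow> set w \<subseteq> {..<n} \<and> (\<forall>i. Suc i < length w \<longrightarrow> w ! i \<noteq> w ! Suc i)"

text \<open>The (B, y)-part of the seed of the (d,z)-cluster pattern with principal coefficients
  at the vertex reached from t0 along the path w (mutating at w!0 first).\<close>
definition pattern :: "(nat \<Rightarrow> nat) \<Rightarrow> (nat \<Rightarrow> nat \<Rightarrow> int) \<Rightarrow> nat list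
                        \<Rightarrow> (nat \<Rightarrow> nat \<Rightarrow> int) \<times> (nat \<Rightarrow> trop)" where
  "pattern d B w = foldl (\<lambda>(B', y) k. (mut_B d k B', mut_y d 1 k B' y)) (B, ygen) w"

text \<open>C-matrix: c_{ij} is the exponent of y_i in y^t_j.\<close>
definition C_matrix :: "(nat \<Rightarrow> nat) \<Rightarrow> (nat \<Rightarrow> nat \<Rightarrow> int) \<Rightarrow> nat list \<Rightarrow> nat \<Rightarrow> nat \<Rightarrow> int" where
  "C_matrix d B w = (\<lambda>i j. fst (snd (pattern d B w) j) i)"

definition diag_mult :: "(nat \<Rightarrow> nat) \<Rightarrow> (nat \<Rightarrow> nat \<Rightarrow> int) \<Rightarrow> (nat \<Rightarrow> nat \<Rightarrow> int)" where
  "diag_mult d B = (\<lambda>i j. int (d i) * B i j)"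

end

theory Submission
  imports Defs
begin

(* The C-matrix only records the y-exponents of the y-variables, so it
   suffices to follow the y-exponent vectors (the first components of the tropical
   elements) along the mutation sequence.  In the tropical semifield the sum
   \<Oplus>_{s=0}^{d_k} z_{k,s} y_k^{\<epsilon>s} has y-exponent vector min(0, \<epsilon> d_k c), where c is the
   exponent vector of y_k: the exponents form an arithmetic progression in s, whose
   minimum is attained at an end point, and the z-factors do not contribute.
   Consequently one (d,z)-mutation of the y-exponents with matrix B agrees with one
   ordinary mutation with matrix DB, while the matrices themselves transform compatibly:
   D \<cdot> mut_B d k B = mut_B 1 k (DB).  An induction along the path w from t0 then shows
   that both invariants persist, and the theorem is the statement at the initial
   y-variables. *)

lemma Min_arith_progression:
  "Min ((\<lambda>s. int s * c) ` {0..m}) = min 0 (int m * (c::int))"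
proof (induction m)
  case 0
  then show ?case by simp
next
  case (Suc m)
  have "{0..Suc m} = insert (Suc m) {0..m}" by auto
  then have "Min ((\<lambda>s. int s * c) ` {0..Suc m})
      = min (int (Suc m) * c) (Min ((\<lambda>s. int s * c) ` {0..m}))"
    by (simp add: Min_insert)
  also have "\<dots> = min 0 (int (Suc m) * c)"
  proof (cases "c \<ge> 0")
    case True
    then show ?thesis using Suc.IH by simp
  next
    case False
    then have "int m * c \<le> 0" "int (Suc m) * c \<le> int m * c"
      by (auto simp: mult_le_0_iff algebra_simps)
    then show ?thesis using Suc.IH by simp
  qed
  finally show ?case .
qed

text \<open>The y-exponent of \<Oplus>_{s=0}^{d_k} z_{k,s} y_k^{\<epsilon>s} is min(0, \<epsilon> d_k c), where c is the
  y-exponent of y_k: the frozen coefficients z_{k,s} carry no y-exponent.\<close>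
lemma y_exponent_tsum:
  "fst (tsum (\<lambda>s. tmul (zgen d k s) (tpow (y k) (eps * int s))) {0..d k}) j
     = min 0 (int (d k) * (eps * fst (y k) j))"
proof -
  have summand: "(\<lambda>s. fst (tmul (zgen d k s) (tpow (y k) (eps * int s))) j)
      = (\<lambda>s. int s * (eps * fst (y k) j))"
    by (auto simp: tmul_def tpow_def zgen_def tone_def)
  show ?thesis
    unfolding tsum_def by (simp only: fst_conv summand Min_arith_progression)
qed

lemma pospart_scale: "pospart (int m * a) = int m * pospart a"
  by (auto simp: pospart_def max_def mult_le_0_iff zero_le_mult_iff)

lemma min0_scale: "min 0 (int m * x) = int m * min 0 (x::int)"
  by (cases "x \<ge> 0") (auto simp: min_def mult_le_0_iff zero_le_mult_iff)

lemma diag_mult_mut_B: "diag_mult d (mut_B d k B) = mut_B (\<lambda>_. 1) k (diag_mult d B)"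
proof (intro ext)
  fix i j
  have "pospart (- (int (d i) * B i k)) = int (d i) * pospart (- B i k)"
    using pospart_scale[of "d i" "- B i k"] by simp
  moreover have "pospart (int (d k) * B k j) = int (d k) * pospart (B k j)"
    by (rule pospart_scale)
  ultimately show "diag_mult d (mut_B d k B) i j = mut_B (\<lambda>_. 1) k (diag_mult d B) i j"
    unfolding diag_mult_def mut_B_def by (simp add: algebra_simps)
qed

lemma y_exponent_mut_y_formula:
  "fst (mut_y d eps k B y i) j =
     (if i = k then - fst (y k) j
      else fst (y i) j + int (d k) * (pospart (eps * B k i) * fst (y k) j)
           - B k i * min 0 (int (d k) * (eps * fst (y k) j)))"
  using y_exponent_tsum[of d k y eps j]
  by (simp add: mut_y_def tmul_def tpow_def algebra_simps)

lemma y_exponent_mut_y: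
  assumes "\<And>j. fst (y1 j) = fst (y2 j)"
  shows "fst (mut_y d eps k B y1 i) = fst (mut_y (\<lambda>_. 1) eps k (diag_mult d B) y2 i)"
proof
  fix j
  have "pospart (eps * (int (d k) * B k i)) = int (d k) * pospart (eps * B k i)"
    using pospart_scale[of "d k" "eps * B k i"] by (simp add: algebra_simps)
  moreover have "min 0 (int (d k) * (eps * fst (y2 k) j)) = int (d k) * min 0 (eps * fst (y2 k) j)"
    by (rule min0_scale)
  ultimately show "fst (mut_y d eps k B y1 i) j = fst (mut_y (\<lambda>_. 1) eps k (diag_mult d B) y2 i) j"
    unfolding y_exponent_mut_y_formula by (simp add: assms diag_mult_def algebra_simps)
qed

definition mutate_path ::
  "(nat \<Rightarrow> nat) \<Rightarrow> (nat \<Rightarrow> nat \<Rightarrow> int) \<Rightarrow> (nat \<Rightarrow> trop) \<Rightarrow> nat list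
     \<Rightarrow> (nat \<Rightarrow> nat \<Rightarrow> int) \<times> (nat \<Rightarrow> trop)" where
  "mutate_path d B y w = foldl (\<lambda>(B', y) k. (mut_B d k B', mut_y d 1 k B' y)) (B, y) w"

lemma mutate_path_Cons:
  "mutate_path d B y (k # w) = mutate_path d (mut_B d k B) (mut_y d 1 k B y) w"
  by (simp add: mutate_path_def)

lemma mutate_path_diag_mult:
  assumes "\<And>j. fst (y1 j) = fst (y2 j)"
  shows "diag_mult d (fst (mutate_path d B y1 w)) = fst (mutate_path (\<lambda>_. 1) (diag_mult d B) y2 w)
    \<and> (\<forall>j. fst (snd (mutate_path d B y1 w) j)
           = fst (snd (mutate_path (\<lambda>_. 1) (diag_mult d B) y2 w) j))"
  using assms
proof (induction w arbitrary: B y1 y2)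
  case Nil
  then show ?case by (simp add: mutate_path_def)
next
  case (Cons k w)
  have "\<And>j. fst (mut_y d 1 k B y1 j) = fst (mut_y (\<lambda>_. 1) 1 k (diag_mult d B) y2 j)"
    using Cons.prems by (rule y_exponent_mut_y)
  from Cons.IH[OF this] show ?case
    by (simp add: mutate_path_Cons diag_mult_mut_B)
qed

theorem mainTheorem7:
  fixes n :: nat and B :: "nat \<Rightarrow> nat \<Rightarrow> int" and d :: "nat \<Rightarrow> nat" and w :: "nat list"
  assumes "skew_symmetrizable n B"
    and "\<forall>i<n. d i > 0"
    and "tree_vertex n w"
  shows "\<forall>i<n. \<forall>j<n. C_matrix d B w i j = C_matrix (\<lambda>_. 1) (diag_mult d B) w i j"
proof -
  have "pattern d' B' w = mutate_path d' B' ygen w" for d' B'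
    by (simp add: pattern_def mutate_path_def)
  moreover have "\<forall>j. fst (snd (mutate_path d B ygen w) j)
      = fst (snd (mutate_path (\<lambda>_. 1) (diag_mult d B) ygen w) j)"
    using mutate_path_diag_mult[of ygen ygen d B w] by blast
  ultimately show ?thesis by (simp add: C_matrix_def)
qed

end
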